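(* Let $R=\mathbb C[S_1,\ldots,S_n]/I$ be a local algebra of dimension $n+2$ which is an $n$-factor, with a proper basis $\mu_1,\ldots,\mu_{n+2}$ (so $\mu_1=1$ and $\mu_2,\ldots,\mu_{n+1}$ are the images of $S_1,\ldots,S_n$). Suppose $B$ is a nondegenerate symmetric bilinear form on $R$ satisfying $B(\mu_ix,y)+B(x,\mu_iy)=0$ for all $i=2,\ldots,n+1$ and $x,y\in R$, and $B(1,1)=0$. Then: (1) $B(1,\mu_i)=0$ for $i=2,\ldots,n+1$; (2) $B(\mu_i,\mu_j)=-B(1,\mu_i\mu_j)$ for $i,j=2,\ldots,n+1$; (3) $B(\mu_i,\mu_{n+2})=0$ for $i=2,\ldots,n+2$, and $B(1,\mu_{n+2})\neq0$; (4) $\dim_{\mathbb C}\mathfrak m_R^2=1$ and $\mathfrak m_R^2=\langle\mu_{n+2}\rangle$; (5) if $B$ is normalized so that $B(1,\mu_{n+2})=-1$, then $B=B_0$.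
   Context: A local algebra means a finite-dimensional commutative associative unital $\mathbb C$-algebra with a unique maximal ideal $\mathfrak m_R$ and residue field $\mathbb C$. An $n$-factor is a quotient $\mathbb C[S_1,\ldots,S_n]/I$ in which the images of $S_1,\ldots,S_n$ are linearly independent (they lie in $\mathfrak m_R$). A $\mathbb C$-basis $\mu_1,\ldots,\mu_{n+2}$ of an $n$-factor $R$ is proper if $\mu_1=1$, $\mu_2,\ldots,\mu_{n+1}$ are the images of $S_1,\ldots,S_n$, $\mu_{n+2}$ can be expressed as a polynomial in $\mu_2,\ldots,\mu_{n+1}$, and every power $\mathfrak m_R^k$ is spanned by a subset of the basis vectors. When $\mathfrak m_R^2=\langle\mu_{n+2}\rangle$ is one-dimensional, $B_0$ is the symmetric bilinear form on $R$ defined by $B_0(\mu_1,\mu_j)=-\delta_{j,n+2}$ for all $j$, $B_0(\mu_i,\mu_{n+2})=-\delta_{i,1}$ for all $i$, and $B_0(\mu_i,\mu_j)=a_{ij}$ for $i,j=2,\ldots,n+1$, where $\mu_i\mu_j=a_{ij}\mu_{n+2}$ ($\delta$ is the Kronecker delta). *)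

theory Defs
  imports Complex_Main
begin

text \<open>A commutative unital C-algebra is modelled as a type 'a of class comm_ring_1
  together with a scalar multiplication sc by complex numbers making it a complex
  vector space compatible with the ring multiplication.\<close>

definition calg :: "(complex \<Rightarrow> 'a::comm_ring_1 \<Rightarrow> 'a) \<Rightarrow> bool" where
  "calg sc \<longleftrightarrow> vector_space sc \<and> (\<forall>c x y. sc c (x * y) = sc c x * y)"

definition is_ideal :: "'a::comm_ring_1 set \<Rightarrow> bool" where
  "is_ideal I \<longleftrightarrow> 0 \<in> I \<and> (\<forall>x\<in>I. \<forall>y\<in>I. x + y \<in> I) \<and> (\<forall>r. \<forall>x\<in>I. r * x \<in> I)"

definition is_maximal_ideal :: "'a::comm_ring_1 set \<Rightarrow> bool" where
  "is_maximal_ideal M \<longleftrightarrow> is_ideal M \<and> M \<noteq> UNIV \<and>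
     (\<forall>J. is_ideal J \<and> M \<subseteq> J \<longrightarrow> J = M \<or> J = UNIV)"

text \<open>The maximal ideal m_R of a local ring (meaningful when it is unique).\<close>
definition max_ideal :: "'a::comm_ring_1 set" where
  "max_ideal = (THE M. is_maximal_ideal M)"

text \<open>Local algebra: finite-dimensional, unique maximal ideal, residue field C.\<close>
definition local_algebra :: "(complex \<Rightarrow> 'a::comm_ring_1 \<Rightarrow> 'a) \<Rightarrow> bool" where
  "local_algebra sc \<longleftrightarrow> calg sc \<and>
     (\<exists>B. finite B \<and> module.span sc B = UNIV) \<and>
     (\<exists>!M. is_maximal_ideal (M :: 'a set)) \<and>
     (\<forall>x. \<exists>c. x - sc c 1 \<in> max_ideal)"

fun ideal_pow :: "(complex \<Rightarrow> 'a::comm_ring_1 \<Rightarrow> 'a) \<Rightarrow> 'a set \<Rightarrow> nat \<Rightarrow> 'a set" where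
  "ideal_pow sc M 0 = UNIV"
| "ideal_pow sc M (Suc k) = module.span sc {x * y | x y. x \<in> M \<and> y \<in> ideal_pow sc M k}"

inductive_set gen_alg :: "(complex \<Rightarrow> 'a::comm_ring_1 \<Rightarrow> 'a) \<Rightarrow> 'a set \<Rightarrow> 'a set"
  for sc :: "complex \<Rightarrow> 'a \<Rightarrow> 'a" and S :: "'a set" where
  one: "1 \<in> gen_alg sc S"
| gen: "s \<in> S \<Longrightarrow> s \<in> gen_alg sc S"
| add: "x \<in> gen_alg sc S \<Longrightarrow> y \<in> gen_alg sc S \<Longrightarrow> x + y \<in> gen_alg sc S"
| mult: "x \<in> gen_alg sc S \<Longrightarrow> y \<in> gen_alg sc S \<Longrightarrow> x * y \<in> gen_alg sc S"
| scale: "x \<in> gen_alg sc S \<Longrightarrow> sc c x \<in> gen_alg sc S"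

text \<open>R is an n-factor with the images of S_1..S_n being mu 2, ..., mu (n+1):
  i.e. R = C[S_1..S_n]/I (the evaluation map S_i |-> mu (i+1) is surjective,
  i.e. these elements generate R as a C-algebra), and the images are linearly
  independent and lie in m_R.\<close>
definition n_factor :: "(complex \<Rightarrow> 'a::comm_ring_1 \<Rightarrow> 'a) \<Rightarrow> nat \<Rightarrow> (nat \<Rightarrow> 'a) \<Rightarrow> bool" where
  "n_factor sc n s \<longleftrightarrow> gen_alg sc (s ` {2..n+1}) = UNIV \<and>
     inj_on s {2..n+1} \<and> \<not> module.dependent sc (s ` {2..n+1}) \<and>
     s ` {2..n+1} \<subseteq> max_ideal"

definition proper_basis :: "(complex \<Rightarrow> 'a::comm_ring_1 \<Rightarrow> 'a) \<Rightarrow> nat \<Rightarrow> (nat \<Rightarrow> 'a) \<Rightarrow> bool" where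
  "proper_basis sc n mu \<longleftrightarrow>
     inj_on mu {1..n+2} \<and> \<not> module.dependent sc (mu ` {1..n+2}) \<and>
     module.span sc (mu ` {1..n+2}) = UNIV \<and>
     mu 1 = 1 \<and>
     mu (n+2) \<in> gen_alg sc (mu ` {2..n+1}) \<and>
     (\<forall>k. \<exists>J \<subseteq> {1..n+2}. ideal_pow sc max_ideal k = module.span sc (mu ` J))"

definition bilinear_form :: "(complex \<Rightarrow> 'a::comm_ring_1 \<Rightarrow> 'a) \<Rightarrow> ('a \<Rightarrow> 'a \<Rightarrow> complex) \<Rightarrow> bool" where
  "bilinear_form sc B \<longleftrightarrow>
     (\<forall>x y z. B (x + y) z = B x z + B y z) \<and> (\<forall>c x y. B (sc c x) y = c * B x y) \<and>
     (\<forall>x y z. B x (y + z) = B x y + B x z) \<and> (\<forall>c x y. B x (sc c y) = c * B x y)"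

definition symmetric_form :: "('a \<Rightarrow> 'a \<Rightarrow> complex) \<Rightarrow> bool" where
  "symmetric_form B \<longleftrightarrow> (\<forall>x y. B x y = B y x)"

definition nondegenerate :: "('a::zero \<Rightarrow> 'a \<Rightarrow> complex) \<Rightarrow> bool" where
  "nondegenerate B \<longleftrightarrow> (\<forall>x. (\<forall>y. B x y = 0) \<longrightarrow> x = 0)"

definition coord :: "(complex \<Rightarrow> 'a::comm_ring_1 \<Rightarrow> 'a) \<Rightarrow> nat \<Rightarrow> (nat \<Rightarrow> 'a) \<Rightarrow> 'a \<Rightarrow> nat \<Rightarrow> complex" where
  "coord sc n mu v k = module.representation sc (mu ` {1..n+2}) v (mu k)"

text \<open>The form B_0 (when m_R^2 = <mu (n+2)>): a_ij is the coefficient with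
  mu i * mu j = a_ij mu (n+2); B_0 is the symmetric bilinear form with
  B_0(mu 1, mu j) = -delta_{j,n+2}, B_0(mu i, mu (n+2)) = -delta_{i,1},
  B_0(mu i, mu j) = a_ij for 2 <= i,j <= n+1.\<close>
definition B0 :: "(complex \<Rightarrow> 'a::comm_ring_1 \<Rightarrow> 'a) \<Rightarrow> nat \<Rightarrow> (nat \<Rightarrow> 'a) \<Rightarrow> 'a \<Rightarrow> 'a \<Rightarrow> complex" where
  "B0 sc n mu x y =
     - (coord sc n mu x 1 * coord sc n mu y (n+2)) - (coord sc n mu x (n+2) * coord sc n mu y 1)
     + (\<Sum>i\<in>{2..n+1}. \<Sum>j\<in>{2..n+1}.
          coord sc n mu (mu i * mu j) (n+2) * coord sc n mu x i * coord sc n mu y j)"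

end

theory Submission
  imports Defs
begin

text \<open>
  The proof splits R into the self-adjoint multipliers E and the
  skew-adjoint multipliers D.  Both are subspaces, E.E and D.D lie in E, E.D lies in D,
  E \<inter> D = 0 and E \<bottom> D; since the generators lie in D and 1 lies in E, every element of
  the generated algebra R is e + d with e \<in> E, d \<in> D.  This already gives (1) and (2).

  Nondegeneracy produces f \<in> E \<inter> m_R with B(1,f) \<noteq> 0; a dimension count shows that
  1, f, mu 2, ..., mu (n+1) is a basis, whence E = <1,f> and D = <mu 2,...,mu (n+1)>.
  Locality forces f^2 = 0, then D.f = 0 by nondegeneracy, and so m_R^2 \<subseteq> <f>.  The
  proper basis then yields m_R^2 = <mu (n+2)> with mu (n+2) a nonzero multiple of f,
  which gives (3) and (4).  Finally (5) follows by expanding B in the basis.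
\<close>

lemma calg_vector_space: "calg sc \<Longrightarrow> vector_space sc"
  unfolding calg_def by blast

lemma calg_scale_mult_left: "calg sc \<Longrightarrow> sc c (x * y) = sc c x * y"
  unfolding calg_def by blast

lemma calg_scale_mult_right: "calg sc \<Longrightarrow> sc c (x * y) = x * sc c y"
  using calg_scale_mult_left by (metis mult.commute)

lemma calg_scale_one_mult: "calg sc \<Longrightarrow> sc c 1 * x = sc c x"
  by (metis calg_scale_mult_left mult_1_left)

lemma ideal_subspace:
  assumes "calg sc" "is_ideal I" shows "module.subspace sc I"
proof -
  interpret vector_space sc using assms(1) by (rule calg_vector_space)
  show ?thesis unfolding subspace_def
  proof (intro conjI ballI allI)
    show "0 \<in> I" "\<And>x y. x \<in> I \<Longrightarrow> y \<in> I \<Longrightarrow> x + y \<in> I"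
      using assms(2) unfolding is_ideal_def by blast+
    show "sc c x \<in> I" if "x \<in> I" for c x
    proof -
      have "sc c 1 * x \<in> I" using assms(2) that unfolding is_ideal_def by blast
      then show ?thesis by (simp only: calg_scale_one_mult[OF assms(1)])
    qed
  qed
qed

lemma ideal_eq_UNIV_if_one: "is_ideal I \<Longrightarrow> 1 \<in> I \<Longrightarrow> I = UNIV"
  unfolding is_ideal_def by (metis UNIV_eq_I mult_1_right)

text \<open>In a finite-dimensional algebra every proper ideal lies in a maximal ideal:
  take a proper ideal containing it of largest dimension.\<close>

lemma exists_max_ideal:
  fixes sc :: "complex \<Rightarrow> 'a::comm_ring_1 \<Rightarrow> 'a"
  assumes fd: "finite_dimensional_vector_space sc Bs" and ca: "calg sc"
    and I: "is_ideal (I::'a set)" "I \<noteq> UNIV"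
  shows "\<exists>J. is_maximal_ideal J \<and> I \<subseteq> J"
proof -
  interpret fd: finite_dimensional_vector_space sc Bs by (rule fd)
  define P where "P J \<longleftrightarrow> is_ideal J \<and> J \<noteq> UNIV \<and> I \<subseteq> J" for J :: "'a set"
  have "P I" using I by (simp add: P_def)
  moreover have "\<forall>J. P J \<longrightarrow> fd.dim J < Suc fd.dimension"
    using fd.dim_subset_UNIV by (simp add: less_Suc_eq_le)
  ultimately have "\<exists>J. P J \<and> (\<forall>J'. P J' \<longrightarrow> fd.dim J' \<le> fd.dim J)"
    by (rule ex_has_greatest_nat)
  then obtain J where J: "P J" and Jg: "\<forall>J'. P J' \<longrightarrow> fd.dim J' \<le> fd.dim J"
    by blast
  have "is_maximal_ideal J"
    unfolding is_maximal_ideal_def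
  proof (intro conjI allI impI)
    show "is_ideal J" "J \<noteq> UNIV" using J by (auto simp: P_def)
    fix J' assume J': "is_ideal J' \<and> J \<subseteq> J'"
    show "J' = J \<or> J' = UNIV"
    proof (cases "J' = UNIV")
      case False
      then have "fd.dim J' \<le> fd.dim J" using Jg J' J by (auto simp: P_def)
      then have "fd.span J = fd.span J'" using fd.dim_eq_span J' by blast
      moreover have "fd.subspace J" "fd.subspace J'"
        using ideal_subspace[OF ca] J' J by (auto simp: P_def)
      ultimately show ?thesis by (metis fd.span_eq_iff)
    qed simp
  qed
  then show ?thesis using J by (auto simp: P_def)
qed

lemma gen_alg_minimal:
  assumes "1 \<in> A" "S \<subseteq> A"
    and "\<And>x y. x \<in> A \<Longrightarrow> y \<in> A \<Longrightarrow> x + y \<in> A"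
    and "\<And>x y. x \<in> A \<Longrightarrow> y \<in> A \<Longrightarrow> x * y \<in> A"
    and "\<And>c x. x \<in> A \<Longrightarrow> sc c x \<in> A"
  shows "gen_alg sc S \<subseteq> A"
proof
  fix x assume "x \<in> gen_alg sc S"
  then show "x \<in> A" by induction (use assms in auto)
qed

section \<open>Local algebras\<close>

locale local_alg =
  fixes sc :: "complex \<Rightarrow> 'a::comm_ring_1 \<Rightarrow> 'a"
  assumes local: "local_algebra sc"
begin

lemma local_calg: "calg sc"
  using local unfolding local_algebra_def by blast

sublocale vs: vector_space sc
  by (rule calg_vector_space[OF local_calg])

abbreviation M :: "'a set" where
  "M \<equiv> max_ideal"

lemma scale_mult_left: "sc c (x * y) = sc c x * y"
  using calg_scale_mult_left[OF local_calg] .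

lemma scale_mult_right: "sc c (x * y) = x * sc c y"
  using calg_scale_mult_right[OF local_calg] .

lemma finite_dimensional: "\<exists>Bs. finite_dimensional_vector_space sc Bs"
proof -
  obtain S where S: "finite S" "vs.span S = UNIV"
    using local unfolding local_algebra_def by blast
  obtain Bs where Bs: "Bs \<subseteq> S" "vs.independent Bs" "S \<subseteq> vs.span Bs"
    using vs.maximal_independent_subset by blast
  have "vs.span Bs = UNIV"
    using S(2) Bs(3) by (metis top.extremum_uniqueI vs.span_mono vs.span_span)
  then show ?thesis
    using Bs S(1) finite_subset
    by (metis finite_dimensional_vector_space.intro finite_dimensional_vector_space_axioms.intro
        vs.vector_space_axioms)
qed

lemma dim_span_singleton:
  assumes "x \<noteq> 0" shows "vs.dim (vs.span {x}) = 1"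
proof -
  obtain Bs where "finite_dimensional_vector_space sc Bs" using finite_dimensional by blast
  then interpret fd: finite_dimensional_vector_space sc Bs .
  show ?thesis using assms by simp
qed

lemma M_maximal: "is_maximal_ideal M"
proof -
  have "\<exists>!M. is_maximal_ideal (M :: 'a set)"
    using local unfolding local_algebra_def by blast
  then show ?thesis unfolding max_ideal_def by (rule theI'[of is_maximal_ideal])
qed

lemma M_unique: "is_maximal_ideal J \<Longrightarrow> J = M"
  using local M_maximal unfolding local_algebra_def by blast

lemma M_ideal: "is_ideal M"
  using M_maximal unfolding is_maximal_ideal_def by blast

lemma M_subspace: "vs.subspace M"
  by (rule ideal_subspace[OF local_calg M_ideal])

lemma M_mult: "x \<in> M \<Longrightarrow> r * x \<in> M"
  using M_ideal unfolding is_ideal_def by blast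

lemma one_not_in_M: "1 \<notin> M"
  using M_maximal ideal_eq_UNIV_if_one unfolding is_maximal_ideal_def by blast

lemma residue: "\<exists>c. x - sc c 1 \<in> M"
  using local unfolding local_algebra_def by blast

lemma scale_one_in_M: "sc a 1 \<in> M \<Longrightarrow> a = 0"
proof (rule ccontr)
  assume a1: "sc a 1 \<in> M" and "a \<noteq> 0"
  have "sc (inverse a) (sc a 1) \<in> M"
    using vs.subspace_scale[OF M_subspace a1] .
  moreover have "sc (inverse a) (sc a 1) = 1"
    using \<open>a \<noteq> 0\<close> by (simp add: vs.scale_scale)
  ultimately show False using one_not_in_M by simp
qed

lemma proper_ideal_le_M:
  assumes "is_ideal I" "I \<noteq> UNIV" shows "I \<subseteq> M"
proof -
  obtain Bs where "finite_dimensional_vector_space sc Bs" using finite_dimensional by blast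
  from exists_max_ideal[OF this local_calg assms] show ?thesis using M_unique by blast
qed

lemma unit_if_not_in_M:
  assumes "x \<notin> M" shows "\<exists>y. y * x = 1"
proof -
  have ideal: "is_ideal (range (\<lambda>r. r * x))"
    unfolding is_ideal_def
    by (auto simp: image_iff distrib_right[symmetric] mult.assoc[symmetric]) (metis mult_zero_left)
  have "x \<in> range (\<lambda>r. r * x)" by (metis mult_1 rangeI)
  then have "range (\<lambda>r. r * x) = UNIV"
    using proper_ideal_le_M[OF ideal] assms by blast
  then show ?thesis by (metis UNIV_I image_iff)
qed

text \<open>An element of the maximal ideal proportional to its own square squares to zero
  (a nonzero idempotent would split the local algebra).\<close>

lemma square_zero_if_proportional:
  assumes f: "f \<in> M" and ff: "f * f = sc c f"
  shows "f * f = 0"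
proof (cases "c = 0")
  case False
  define u where "u = sc c 1 - f"
  have "u \<notin> M"
  proof
    assume "u \<in> M"
    then have "sc c 1 \<in> M"
      using vs.subspace_add[OF M_subspace _ f] unfolding u_def by force
    with False show False using scale_one_in_M by blast
  qed
  then obtain y where y: "y * u = 1" using unit_if_not_in_M by blast
  have "f * u = 0"
    unfolding u_def by (simp add: right_diff_distrib ff scale_mult_right[symmetric])
  then have "f = 0" using y by (metis mult.left_commute mult_1_right mult_zero_right)
  then show ?thesis by simp
qed (use ff in simp)

text \<open>Since m_R is an ideal and a subspace, m_R^1 = m_R, so m_R^2 is spanned by the
  products of two elements of m_R.\<close>

lemma ideal_pow_two:
  "ideal_pow sc M 2 = vs.span {x * y | x y. x \<in> M \<and> y \<in> M}"
proof -
  have "{x * y | x y. x \<in> M \<and> y \<in> (UNIV :: 'a set)} = M"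
    using M_mult by (auto simp: mult.commute) (metis mult_1_right)
  then have "ideal_pow sc M 1 = M"
    using vs.span_eq_iff M_subspace by simp
  then show ?thesis by (simp add: numeral_2_eq_2)
qed

end

section \<open>Symmetric forms and adjoint multipliers\<close>

locale sym_form =
  fixes sc :: "complex \<Rightarrow> 'a::comm_ring_1 \<Rightarrow> 'a" and B :: "'a \<Rightarrow> 'a \<Rightarrow> complex"
  assumes calg: "calg sc" and bilinear: "bilinear_form sc B"
    and symmetric: "symmetric_form B" and nondeg: "nondegenerate B"
begin

sublocale vs: vector_space sc
  by (rule calg_vector_space[OF calg])

lemma B_add_left: "B (x + y) z = B x z + B y z"
  and B_scale_left: "B (sc c x) y = c * B x y"
  and B_add_right: "B x (y + z) = B x y + B x z"
  and B_scale_right: "B x (sc c y) = c * B x y"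
  using bilinear unfolding bilinear_form_def by blast+

lemma B_commute: "B x y = B y x"
  using symmetric unfolding symmetric_form_def by blast

lemma B_zero_left [simp]: "B 0 y = 0"
  using B_add_left[of 0 0] by simp

lemma B_zero_right [simp]: "B x 0 = 0"
  using B_add_right[of _ 0 0] by simp

lemma B_diff_right: "B x (y - z) = B x y - B x z"
  using B_add_right[of x "y - z" z] by (simp add: eq_diff_eq)

lemma B_sum_left: "finite K \<Longrightarrow> B (\<Sum>k\<in>K. sc (g k) (v k)) y = (\<Sum>k\<in>K. g k * B (v k) y)"
  by (induction K rule: finite_induct) (simp_all add: B_add_left B_scale_left)

lemma nondeg_zero: "(\<And>y. B x y = 0) \<Longrightarrow> x = 0"
  using nondeg unfolding nondegenerate_def by blast

definition skew :: "'a set" where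
  "skew = {r. \<forall>x y. B (r * x) y = - B x (r * y)}"

definition selfadj :: "'a set" where
  "selfadj = {r. \<forall>x y. B (r * x) y = B x (r * y)}"

lemma adjoint_mult_subspace: "vs.subspace {r. \<forall>x y. B (r * x) y = \<epsilon> * B x (r * y)}"
  unfolding vs.subspace_def
proof (intro conjI ballI allI)
  show "0 \<in> {r. \<forall>x y. B (r * x) y = \<epsilon> * B x (r * y)}" by simp
  show "r + s \<in> {r. \<forall>x y. B (r * x) y = \<epsilon> * B x (r * y)}"
    if "r \<in> {r. \<forall>x y. B (r * x) y = \<epsilon> * B x (r * y)}"
      "s \<in> {r. \<forall>x y. B (r * x) y = \<epsilon> * B x (r * y)}" for r s
    using that by (simp add: distrib_right distrib_left B_add_left B_add_right)
  show "sc c r \<in> {r. \<forall>x y. B (r * x) y = \<epsilon> * B x (r * y)}"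
    if "r \<in> {r. \<forall>x y. B (r * x) y = \<epsilon> * B x (r * y)}" for c r
    using that
    by (simp add: calg_scale_mult_left[OF calg, symmetric] calg_scale_mult_right[OF calg, symmetric]
        B_scale_left B_scale_right mult.commute[of _ r] mult.left_commute[of c])
qed

lemma skew_subspace: "vs.subspace skew"
  using adjoint_mult_subspace[of "-1"] unfolding skew_def by simp

lemma selfadj_subspace: "vs.subspace selfadj"
  using adjoint_mult_subspace[of 1] unfolding selfadj_def by simp

lemma one_selfadj: "1 \<in> selfadj"
  unfolding selfadj_def by simp

lemma skew_mult_skew: "r \<in> skew \<Longrightarrow> s \<in> skew \<Longrightarrow> r * s \<in> selfadj"
  and skew_mult_selfadj: "r \<in> skew \<Longrightarrow> s \<in> selfadj \<Longrightarrow> r * s \<in> skew"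
  and selfadj_mult_skew: "r \<in> selfadj \<Longrightarrow> s \<in> skew \<Longrightarrow> r * s \<in> skew"
  and selfadj_mult_selfadj: "r \<in> selfadj \<Longrightarrow> s \<in> selfadj \<Longrightarrow> r * s \<in> selfadj"
  unfolding skew_def selfadj_def by (simp_all add: mult.assoc mult.left_commute[of r])

text \<open>Since B(e, y) = B(1, e y) for e self-adjoint, and B(d, y) = -B(1, d y) for d skew,
  nondegeneracy separates E and D, and symmetry makes them orthogonal.\<close>

lemma selfadj_B: "e \<in> selfadj \<Longrightarrow> B e y = B 1 (e * y)"
  unfolding selfadj_def using mult_1_right[of e] by (metis (mono_tags, lifting) mem_Collect_eq)

lemma skew_B: "d \<in> skew \<Longrightarrow> B d y = - B 1 (d * y)"
  unfolding skew_def using mult_1_right[of d] by (metis (mono_tags, lifting) mem_Collect_eq)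

lemma skew_selfadj_zero:
  assumes "r \<in> skew" "r \<in> selfadj" shows "r = 0"
proof (rule nondeg_zero)
  fix y
  have "B r y = - B 1 (r * y)" "B r y = B 1 (r * y)"
    using skew_B[OF assms(1)] selfadj_B[OF assms(2)] by blast+
  then show "B r y = 0" by simp
qed

lemma selfadj_skew_orth:
  assumes "e \<in> selfadj" "d \<in> skew" shows "B e d = 0"
proof -
  have "B e d = B 1 (e * d)" "B d e = - B 1 (e * d)"
    using selfadj_B[OF assms(1)] skew_B[OF assms(2)] by (simp_all add: mult.commute)
  then show ?thesis using B_commute[of e d] by simp
qed

lemma B_one_skew: "d \<in> skew \<Longrightarrow> B 1 d = 0"
  using selfadj_skew_orth[OF one_selfadj] .

lemma gen_alg_decomposition:
  assumes "S \<subseteq> skew" "x \<in> gen_alg sc S"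
  shows "\<exists>e d. e \<in> selfadj \<and> d \<in> skew \<and> x = e + d"
proof -
  let ?A = "{e + d | e d. e \<in> selfadj \<and> d \<in> skew}"
  note E = selfadj_subspace and D = skew_subspace
  have "gen_alg sc S \<subseteq> ?A"
  proof (rule gen_alg_minimal)
    show "1 \<in> ?A" using one_selfadj vs.subspace_0[OF D] by force
    show "S \<subseteq> ?A" using assms(1) vs.subspace_0[OF E] by force
    show "x + y \<in> ?A" if x: "x \<in> ?A" and y: "y \<in> ?A" for x y
    proof -
      obtain e d e' d' where "e \<in> selfadj" "d \<in> skew" "e' \<in> selfadj" "d' \<in> skew"
        and "x = e + d" "y = e' + d'" using x y by blast
      then show ?thesis
        by (intro CollectI exI[of _ "e + e'"] exI[of _ "d + d'"])
          (simp add: vs.subspace_add[OF E] vs.subspace_add[OF D] algebra_simps)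
    qed
    show "x * y \<in> ?A" if x: "x \<in> ?A" and y: "y \<in> ?A" for x y
    proof -
      obtain e d e' d' where "e \<in> selfadj" "d \<in> skew" "e' \<in> selfadj" "d' \<in> skew"
        and "x = e + d" "y = e' + d'" using x y by blast
      then show ?thesis
        by (intro CollectI exI[of _ "e * e' + d * d'"] exI[of _ "e * d' + d * e'"])
          (simp add: vs.subspace_add[OF E] vs.subspace_add[OF D] skew_mult_skew
            skew_mult_selfadj selfadj_mult_skew selfadj_mult_selfadj algebra_simps)
    qed
    show "sc c x \<in> ?A" if x: "x \<in> ?A" for c x
    proof -
      obtain e d where "e \<in> selfadj" "d \<in> skew" "x = e + d" using x by blast
      then show ?thesis
        by (intro CollectI exI[of _ "sc c e"] exI[of _ "sc c d"])
          (simp add: vs.subspace_scale[OF E] vs.subspace_scale[OF D] vs.scale_right_distrib)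
    qed
  qed
  then show ?thesis using assms(2) by blast
qed

lemma gen_alg_square_zero:
  assumes "S \<subseteq> skew" "x \<in> gen_alg sc S"
    and DD: "\<And>d d'. d \<in> skew \<Longrightarrow> d' \<in> skew \<Longrightarrow> d * d' = 0"
  shows "\<exists>a d. d \<in> skew \<and> x = sc a 1 + d"
proof -
  let ?A = "{sc a 1 + d | a d. d \<in> skew}"
  note D = skew_subspace
  have "gen_alg sc S \<subseteq> ?A"
  proof (rule gen_alg_minimal)
    show "1 \<in> ?A" using vs.subspace_0[OF D] by (intro CollectI exI[of _ 1] exI[of _ 0]) simp
    show "S \<subseteq> ?A"
    proof
      fix s assume "s \<in> S"
      then show "s \<in> ?A" using assms(1) by (intro CollectI exI[of _ 0] exI[of _ s]) auto
    qed
    show "x + y \<in> ?A" if x: "x \<in> ?A" and y: "y \<in> ?A" for x y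
    proof -
      obtain a d a' d' where "d \<in> skew" "d' \<in> skew" "x = sc a 1 + d" "y = sc a' 1 + d'"
        using x y by blast
      then show ?thesis
        by (intro CollectI exI[of _ "a + a'"] exI[of _ "d + d'"])
          (simp add: vs.subspace_add[OF D] vs.scale_left_distrib algebra_simps)
    qed
    show "x * y \<in> ?A" if x: "x \<in> ?A" and y: "y \<in> ?A" for x y
    proof -
      obtain a d a' d' where h: "d \<in> skew" "d' \<in> skew" "x = sc a 1 + d" "y = sc a' 1 + d'"
        using x y by blast
      have "x * y = sc a 1 * sc a' 1 + sc a 1 * d' + d * sc a' 1 + d * d'"
        using h(3,4) by (simp add: algebra_simps)
      also have "\<dots> = sc (a * a') 1 + (sc a d' + sc a' d)"
        using DD[OF h(1,2)]
        by (simp add: calg_scale_one_mult[OF calg] mult.commute[of d] vs.scale_scale)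
      finally show ?thesis
        using vs.subspace_add[OF D vs.subspace_scale[OF D h(2)] vs.subspace_scale[OF D h(1)]]
        by (intro CollectI exI[of _ "a * a'"] exI[of _ "sc a d' + sc a' d"]) simp
    qed
    show "sc c x \<in> ?A" if x: "x \<in> ?A" for c x
    proof -
      obtain a d where "d \<in> skew" "x = sc a 1 + d" using x by blast
      then show ?thesis
        by (intro CollectI exI[of _ "c * a"] exI[of _ "sc c d"])
          (simp add: vs.subspace_scale[OF D] vs.scale_right_distrib)
    qed
  qed
  then show ?thesis using assms(2) by blast
qed

end

lemma (in vector_space) basis_expansion:
  assumes "independent (v ` I)" "span (v ` I) = UNIV" "inj_on v I" "finite I"
  shows "x = (\<Sum>k\<in>I. representation (v ` I) x (v k) *s v k)"
proof -
  have "(\<Sum>b\<in>v ` I. representation (v ` I) x b *s b) = x"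
    by (rule sum_representation_eq[OF assms(1)]) (use assms(2,4) in auto)
  then show ?thesis
    by (simp add: sum.reindex[OF assms(3)])
qed

lemma sum_split_ends:
  fixes F :: "nat \<Rightarrow> 'b::comm_monoid_add"
  shows "(\<Sum>k\<in>{1..n+2}. F k) = F 1 + F (n+2) + (\<Sum>k\<in>{2..n+1}. F k)"
proof -
  have "{1..n+2} = insert 1 (insert (n+2) {2..n+1})" by auto
  then show ?thesis by (simp add: add.assoc)
qed

locale factor_form = local_alg sc + sym_form sc B
  for sc :: "complex \<Rightarrow> 'a::comm_ring_1 \<Rightarrow> 'a" and B :: "'a \<Rightarrow> 'a \<Rightarrow> complex" +
  fixes n :: nat and mu :: "nat \<Rightarrow> 'a"
  assumes dim_R: "vector_space.dim sc (UNIV :: 'a set) = n + 2"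
    and n_factor: "n_factor sc n mu"
    and proper: "proper_basis sc n mu"
    and invariant: "\<And>i x y. i \<in> {2..n+1} \<Longrightarrow> B (mu i * x) y + B x (mu i * y) = 0"
    and B_one_one: "B 1 1 = 0"
begin

abbreviation gens :: "'a set" where
  "gens \<equiv> mu ` {2..n+1}"

lemma mu_one: "mu 1 = 1"
  and basis_independent: "vs.independent (mu ` {1..n+2})"
  and basis_span: "vs.span (mu ` {1..n+2}) = UNIV"
  and mu_inj: "inj_on mu {1..n+2}"
  and M_power_basis: "\<exists>J \<subseteq> {1..n+2}. ideal_pow sc M k = vs.span (mu ` J)"
  using proper unfolding proper_basis_def by blast+

lemma mu_nonzero: "k \<in> {1..n+2} \<Longrightarrow> mu k \<noteq> 0"
  using basis_independent vs.dependent_zero[of "mu ` {1..n+2}"] by (metis image_eqI)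

lemma gens_generate: "gen_alg sc gens = UNIV"
  and gens_M: "gens \<subseteq> M"
  using n_factor unfolding n_factor_def by blast+

lemma gens_skew: "gens \<subseteq> skew"
  using invariant unfolding skew_def by (auto simp: eq_neg_iff_add_eq_0)

lemma decomposition: "\<exists>e d. e \<in> selfadj \<and> d \<in> skew \<and> x = e + d"
  using gen_alg_decomposition[OF gens_skew] gens_generate by blast

lemma B_one_gen: "i \<in> {2..n+1} \<Longrightarrow> B 1 (mu i) = 0"
  using B_one_skew gens_skew by blast

lemma B_gen_gen: "i \<in> {2..n+1} \<Longrightarrow> B (mu i) (mu j) = - B 1 (mu i * mu j)"
  using invariant[of i 1 "mu j"] by (simp add: eq_neg_iff_add_eq_0)

text \<open>A self-adjoint element of the maximal ideal pairing nontrivially with 1: pair 1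
  with some y, drop the skew part of y and subtract the scalar part.\<close>

lemma exists_witness: "\<exists>f. f \<in> selfadj \<and> f \<in> M \<and> B 1 f \<noteq> 0"
proof -
  have "(1::'a) \<noteq> 0" using mu_nonzero[of 1] mu_one by simp
  then obtain y where "B 1 y \<noteq> 0" using nondeg_zero by blast
  moreover obtain e d where "e \<in> selfadj" "d \<in> skew" "y = e + d" using decomposition by blast
  ultimately have e: "e \<in> selfadj" "B 1 e \<noteq> 0" using B_one_skew B_add_right by auto
  obtain c where c: "e - sc c 1 \<in> M" using residue by blast
  have "e - sc c 1 \<in> selfadj"
    using vs.subspace_diff[OF selfadj_subspace e(1) vs.subspace_scale[OF selfadj_subspace one_selfadj]] .
  moreover have "B 1 (e - sc c 1) \<noteq> 0"
    using e(2) by (simp add: B_diff_right B_scale_right B_one_one)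
  ultimately show ?thesis using c by blast
qed

definition f :: 'a where
  "f = (SOME f. f \<in> selfadj \<and> f \<in> M \<and> B 1 f \<noteq> 0)"

lemma f_selfadj: "f \<in> selfadj" and f_M: "f \<in> M" and B_one_f: "B 1 f \<noteq> 0"
  using someI_ex[OF exists_witness] unfolding f_def by blast+

lemma f_nonzero: "f \<noteq> 0"
  using B_one_f by auto

lemma span_gens_skew: "vs.span gens \<subseteq> skew"
  using vs.span_minimal[OF gens_skew skew_subspace] .

lemma span_gens_M: "vs.span gens \<subseteq> M"
  using vs.span_minimal[OF gens_M M_subspace] .

text \<open>1, f, mu 2, ..., mu (n+1) are n+2 independent vectors, hence a basis:
  f is not skew, and no combination 1 - k f is skew since it lies outside m_R.\<close>

lemma f_not_in_span_gens: "f \<notin> vs.span gens"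
proof
  assume "f \<in> vs.span gens"
  then have "f \<in> skew" using span_gens_skew by blast
  then show False using skew_selfadj_zero f_selfadj f_nonzero by blast
qed

lemma one_not_in_span_f_gens: "1 \<notin> vs.span (insert f gens)"
proof
  assume "1 \<in> vs.span (insert f gens)"
  then obtain k where k: "1 - sc k f \<in> vs.span gens" unfolding vs.span_breakdown_eq ..
  have "1 - sc k f \<in> selfadj"
    using vs.subspace_diff[OF selfadj_subspace one_selfadj
        vs.subspace_scale[OF selfadj_subspace f_selfadj]] .
  then have "1 - sc k f = 0" by (rule skew_selfadj_zero[OF subsetD[OF span_gens_skew k]])
  then have "sc k f = 1" by (rule right_minus_eq[THEN iffD1, symmetric])
  then have "1 \<in> M"
    using vs.subspace_scale[OF M_subspace f_M, of k] by (rule subst[where P = "\<lambda>x. x \<in> M"])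
  then show False using one_not_in_M by blast
qed

lemma spanning_set: "vs.span (insert 1 (insert f gens)) = UNIV"
proof -
  let ?S = "insert 1 (insert f gens)"
  have "card gens = n"
    by (subst card_image) (auto intro: inj_on_subset[OF mu_inj])
  moreover have "f \<notin> gens" using f_not_in_span_gens vs.span_base[of f gens] by blast
  moreover have "1 \<notin> insert f gens"
    using one_not_in_span_f_gens vs.span_base[of 1 "insert f gens"] by blast
  ultimately have card: "card ?S = n + 2" by simp
  have "vs.independent gens"
    by (rule vs.independent_mono[OF basis_independent]) auto
  then have ind: "vs.independent ?S"
    by (intro vs.independent_insertI one_not_in_span_f_gens f_not_in_span_gens)
  obtain Bs where "finite_dimensional_vector_space sc Bs"
    using finite_dimensional by blast
  then have "UNIV \<subseteq> vs.span ?S"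
    using finite_dimensional_vector_space.card_ge_dim_independent[of sc Bs ?S UNIV] ind card dim_R
    by simp
  then show ?thesis by blast
qed

lemma coordinates: "\<exists>a b. x - sc a 1 - sc b f \<in> vs.span gens"
proof -
  have "x \<in> vs.span (insert 1 (insert f gens))" unfolding spanning_set by (rule UNIV_I)
  then obtain a where "x - sc a 1 \<in> vs.span (insert f gens)" unfolding vs.span_breakdown_eq ..
  then obtain b where "x - sc a 1 - sc b f \<in> vs.span gens" unfolding vs.span_breakdown_eq ..
  then show ?thesis by (intro exI)
qed

lemma skew_span_gens:
  assumes d: "d \<in> skew" shows "d \<in> vs.span gens"
proof -
  obtain a b where ab: "d - sc a 1 - sc b f \<in> vs.span gens" using coordinates by blast
  have E: "sc a 1 + sc b f \<in> selfadj"
    using vs.subspace_add[OF selfadj_subspace vs.subspace_scale[OF selfadj_subspace one_selfadj]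
        vs.subspace_scale[OF selfadj_subspace f_selfadj]] .
  have "d - (d - sc a 1 - sc b f) \<in> skew"
    using vs.subspace_diff[OF skew_subspace d subsetD[OF span_gens_skew ab]] .
  moreover have "d - (d - sc a 1 - sc b f) = sc a 1 + sc b f" by (simp add: algebra_simps)
  ultimately have "sc a 1 + sc b f \<in> skew" by (simp only:)
  then have "sc a 1 + sc b f = 0" using skew_selfadj_zero E by blast
  then have "d - sc a 1 - sc b f = d" by (simp only: diff_diff_eq diff_zero)
  then show ?thesis using ab by (simp only:)
qed

lemma skew_M: "d \<in> skew \<Longrightarrow> d \<in> M"
  using skew_span_gens span_gens_M by blast

lemma selfadj_M_multiple:
  assumes e: "e \<in> selfadj" "e \<in> M" shows "\<exists>b. e = sc b f"
proof -
  obtain a b where ab: "e - sc a 1 - sc b f \<in> vs.span gens" using coordinates by blast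
  have "e - sc a 1 - sc b f \<in> selfadj"
    using vs.subspace_diff[OF selfadj_subspace vs.subspace_diff[OF selfadj_subspace e(1)
        vs.subspace_scale[OF selfadj_subspace one_selfadj]]
        vs.subspace_scale[OF selfadj_subspace f_selfadj]] .
  then have z: "e - sc a 1 - sc b f = 0" using skew_selfadj_zero ab span_gens_skew by blast
  then have "sc a 1 = e - sc b f" by (simp add: algebra_simps)
  then have "sc a 1 \<in> M"
    using vs.subspace_diff[OF M_subspace e(2) vs.subspace_scale[OF M_subspace f_M]]
    by simp
  then have "a = 0" by (rule scale_one_in_M)
  then show ?thesis using z by auto
qed

text \<open>f^2 lies on the line <f>, so locality makes it zero.\<close>

lemma f_square: "f * f = 0"
proof -
  have "f * f \<in> selfadj" "f * f \<in> M"
    using selfadj_mult_selfadj[OF f_selfadj f_selfadj] M_mult[OF f_M] by auto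
  then obtain c where "f * f = sc c f" using selfadj_M_multiple by blast
  then show ?thesis using square_zero_if_proportional f_M by blast
qed

lemma B_f_f: "B f f = 0"
  using selfadj_B[OF f_selfadj] f_square by simp

text \<open>D annihilates f: d f is skew and orthogonal to E (being skew) and to D (since
  D.D \<subseteq> E \<inter> m_R = <f> and B(f,f) = 0).\<close>

lemma skew_times_f: assumes d: "d \<in> skew" shows "d * f = 0"
proof (rule nondeg_zero)
  fix y
  obtain e d' where h: "e \<in> selfadj" "d' \<in> skew" "y = e + d'" using decomposition by blast
  have "B (d * f) e = 0"
    using selfadj_skew_orth[OF h(1) skew_mult_selfadj[OF d f_selfadj]] B_commute by metis
  moreover have "B (d * f) d' = 0"
  proof -
    have "B (d * f) d' = - B f (d * d')" using d unfolding skew_def by blast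
    moreover obtain b where "d * d' = sc b f"
      using selfadj_M_multiple skew_mult_skew[OF d h(2)] M_mult[OF skew_M[OF h(2)]]
      by (metis mult.commute)
    ultimately show ?thesis by (simp add: B_scale_right B_f_f)
  qed
  ultimately show "B (d * f) y = 0" using h B_add_right by simp
qed

lemma M_decomposition:
  assumes "x \<in> M" shows "\<exists>a d. d \<in> skew \<and> x = sc a f + d"
proof -
  obtain e d where h: "e \<in> selfadj" "d \<in> skew" "x = e + d" using decomposition by blast
  have "e \<in> M"
    using vs.subspace_diff[OF M_subspace assms skew_M[OF h(2)]] h by simp
  then show ?thesis using selfadj_M_multiple h by blast
qed

lemma M_products:
  assumes "x \<in> M" "y \<in> M" shows "x * y \<in> vs.span {f}"
proof -
  obtain a d where x: "d \<in> skew" "x = sc a f + d" using M_decomposition assms by blast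
  obtain b d' where y: "d' \<in> skew" "y = sc b f + d'" using M_decomposition assms by blast
  have "x * y = sc (a * b) (f * f) + sc a (d' * f) + sc b (d * f) + d * d'"
    using x(2) y(2)
    by (simp add: algebra_simps scale_mult_left[symmetric] scale_mult_right[symmetric])
  then have "x * y = d * d'"
    using f_square skew_times_f[OF x(1)] skew_times_f[OF y(1)] by simp
  moreover obtain t where "d * d' = sc t f"
    using selfadj_M_multiple skew_mult_skew[OF x(1) y(1)]
      M_mult[OF skew_M[OF y(1)]] by (metis mult.commute)
  ultimately show ?thesis unfolding vs.span_singleton by auto
qed

lemma M_square_le: "ideal_pow sc M 2 \<subseteq> vs.span {f}"
  unfolding ideal_pow_two by (rule vs.span_minimal) (use M_products in auto)

text \<open>m_R^2 \<noteq> 0: otherwise D.D = 0, R = C 1 + D, and f would be a scalar.\<close>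

lemma M_square_nonzero: "ideal_pow sc M 2 \<noteq> {0}"
proof
  assume sq: "ideal_pow sc M 2 = {0}"
  have "d * d' = 0" if "d \<in> skew" "d' \<in> skew" for d d'
    using sq skew_M[OF that(1)] skew_M[OF that(2)]
    unfolding ideal_pow_two by (blast intro: vs.span_base)
  then obtain a d where h: "d \<in> skew" "f = sc a 1 + d"
    using gen_alg_square_zero[OF gens_skew] gens_generate by blast
  have "f - sc a 1 \<in> selfadj"
    using vs.subspace_diff[OF selfadj_subspace f_selfadj vs.subspace_scale[OF selfadj_subspace one_selfadj]] .
  moreover have "f - sc a 1 = d" using h(2) by simp
  ultimately have "d \<in> selfadj" by simp
  then have "d = 0" using skew_selfadj_zero h by blast
  then have "a = 0" using h f_M scale_one_in_M by simp
  then show False using h \<open>d = 0\<close> f_nonzero by simp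
qed

text \<open>The proper basis spans m_R^2 by basis vectors; only mu (n+2) can occur.\<close>

lemma M_square: "ideal_pow sc M 2 = vs.span {mu (n+2)}"
proof -
  obtain J where J: "J \<subseteq> {1..n+2}" "ideal_pow sc M 2 = vs.span (mu ` J)"
    using M_power_basis by blast
  have "J \<subseteq> {n+2}"
  proof
    fix k assume k: "k \<in> J"
    have "mu k \<in> vs.span {f}" using J M_square_le vs.span_base k by blast
    then obtain t where t: "mu k = sc t f" unfolding vs.span_singleton by blast
    then have mk: "mu k \<in> selfadj" "mu k \<in> M"
      using vs.subspace_scale[OF selfadj_subspace f_selfadj]
        vs.subspace_scale[OF M_subspace f_M] by auto
    have "k \<noteq> 1" using mk one_not_in_M mu_one by auto
    moreover have "k \<notin> {2..n+1}"
      using mk skew_selfadj_zero gens_skew mu_nonzero J(1) k by fastforce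
    ultimately show "k \<in> {n+2}" using J(1) k by fastforce
  qed
  moreover have "J \<noteq> {}" using J M_square_nonzero by auto
  ultimately have "J = {n+2}" by blast
  then show ?thesis using J(2) by simp
qed

lemma top_multiple_f: "\<exists>c. c \<noteq> 0 \<and> mu (n+2) = sc c f"
proof -
  have "mu (n+2) \<in> vs.span {f}"
    using M_square M_square_le vs.span_base by blast
  then obtain c where "mu (n+2) = sc c f" unfolding vs.span_singleton by blast
  moreover have "mu (n+2) \<noteq> 0" by (rule mu_nonzero) simp
  ultimately show ?thesis by auto
qed

lemma top_selfadj: "mu (n+2) \<in> selfadj"
  using top_multiple_f vs.subspace_scale[OF selfadj_subspace f_selfadj] by metis

lemma B_top: "i \<in> {2..n+2} \<Longrightarrow> B (mu i) (mu (n+2)) = 0"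
proof -
  assume i: "i \<in> {2..n+2}"
  obtain c where c: "mu (n+2) = sc c f" using top_multiple_f by blast
  show ?thesis
  proof (cases "i = n+2")
    case True
    then show ?thesis using c by (simp add: B_scale_left B_scale_right B_f_f)
  next
    case False
    then show ?thesis
      using i selfadj_skew_orth[OF top_selfadj] gens_skew B_commute by fastforce
  qed
qed

lemma B_one_top: "B 1 (mu (n+2)) \<noteq> 0"
  using top_multiple_f B_one_f by (auto simp: B_scale_right)

lemma dim_M_square: "vs.dim (ideal_pow sc M 2) = 1"
  using M_square dim_span_singleton mu_nonzero[of "n+2"] by simp

lemma coord_expansion: "x = (\<Sum>k\<in>{1..n+2}. sc (coord sc n mu x k) (mu k))"
  unfolding coord_def using vs.basis_expansion[OF basis_independent basis_span mu_inj] by simp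

lemma B_expansion_left: "B x y = (\<Sum>k\<in>{1..n+2}. coord sc n mu x k * B (mu k) y)"
proof -
  have "B x y = B (\<Sum>k\<in>{1..n+2}. sc (coord sc n mu x k) (mu k)) y"
    using coord_expansion[of x] by (rule arg_cong[where f = "\<lambda>z. B z y"])
  also have "\<dots> = (\<Sum>k\<in>{1..n+2}. coord sc n mu x k * B (mu k) y)"
    by (rule B_sum_left) simp
  finally show ?thesis .
qed

lemma B_expansion_right: "B x y = (\<Sum>l\<in>{1..n+2}. coord sc n mu y l * B x (mu l))"
  using B_expansion_left[of y x] B_commute by simp

lemma B_expansion:
  "B x y = (\<Sum>k\<in>{1..n+2}. coord sc n mu x k *
      (\<Sum>l\<in>{1..n+2}. coord sc n mu y l * B (mu k) (mu l)))"
  using B_expansion_left[of x y] B_expansion_right[of "mu _" y] by simp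

lemma coord_top_scale: "coord sc n mu (sc t (mu (n+2))) (n+2) = t"
proof -
  have "mu (n+2) \<in> mu ` {1..n+2}" by simp
  then show ?thesis
    using vs.representation_scale[OF basis_independent vs.span_base]
      vs.representation_basis[OF basis_independent]
    unfolding coord_def by simp
qed

text \<open>Statement (5): under the normalization B(1, mu (n+2)) = -1 the form is
  determined on basis vectors, and agrees there with B0.\<close>

lemma B_gen_gen_coord:
  assumes norm: "B 1 (mu (n+2)) = -1" and ij: "i \<in> {2..n+1}" "j \<in> {2..n+1}"
  shows "B (mu i) (mu j) = coord sc n mu (mu i * mu j) (n+2)"
proof -
  have "mu i * mu j \<in> ideal_pow sc M 2"
    unfolding ideal_pow_two using gens_M ij by (blast intro: vs.span_base)
  then obtain t where t: "mu i * mu j = sc t (mu (n+2))"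
    unfolding M_square vs.span_singleton by blast
  have "B (mu i) (mu j) = t" using B_gen_gen[OF ij(1)] t norm by (simp add: B_scale_right)
  then show ?thesis using t coord_top_scale by simp
qed

lemma normalized_form_is_B0:
  assumes norm: "B 1 (mu (n+2)) = -1" shows "B = B0 sc n mu"
proof (intro ext)
  fix x y
  let ?cx = "coord sc n mu x" and ?cy = "coord sc n mu y" and ?m = "mu (n+2)"
  have B_m_1: "B ?m 1 = -1" using norm B_commute by metis
  have B_gen_1: "k \<in> {2..n+1} \<Longrightarrow> B (mu k) 1 = 0" for k using B_one_gen B_commute by metis
  have B_m_gen: "k \<in> {2..n+1} \<Longrightarrow> B ?m (mu k) = 0" for k using B_top B_commute by fastforce
  have B_gen_m: "k \<in> {2..n+1} \<Longrightarrow> B (mu k) ?m = 0" for k using B_top by simp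
  have B_m_m: "B ?m ?m = 0" using B_top by simp
  have "B x y = ?cx 1 * (?cy 1 * B 1 1 + ?cy (n+2) * B 1 ?m + (\<Sum>l\<in>{2..n+1}. ?cy l * B 1 (mu l)))
      + ?cx (n+2) * (?cy 1 * B ?m 1 + ?cy (n+2) * B ?m ?m + (\<Sum>l\<in>{2..n+1}. ?cy l * B ?m (mu l)))
      + (\<Sum>k\<in>{2..n+1}. ?cx k * (?cy 1 * B (mu k) 1 + ?cy (n+2) * B (mu k) ?m
          + (\<Sum>l\<in>{2..n+1}. ?cy l * B (mu k) (mu l))))"
    unfolding B_expansion[of x y] by (simp only: sum_split_ends mu_one)
  also have "\<dots> = - (?cx 1 * ?cy (n+2)) - ?cx (n+2) * ?cy 1
      + (\<Sum>k\<in>{2..n+1}. \<Sum>l\<in>{2..n+1}. coord sc n mu (mu k * mu l) (n+2) * ?cx k * ?cy l)"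
    using B_one_one norm B_m_1 B_m_m B_one_gen B_m_gen B_gen_1 B_gen_m
      B_gen_gen_coord[OF norm]
    by (simp add: sum_distrib_left mult_ac del: sum.cl_ivl_Suc)
  also have "\<dots> = B0 sc n mu x y" unfolding B0_def by simp
  finally show "B x y = B0 sc n mu x y" .
qed

end

theorem lemma6:
  fixes sc :: "complex \<Rightarrow> 'a::comm_ring_1 \<Rightarrow> 'a"
    and n :: nat and mu :: "nat \<Rightarrow> 'a" and B :: "'a \<Rightarrow> 'a \<Rightarrow> complex"
  assumes loc: "local_algebra sc"
    and dimR: "vector_space.dim sc (UNIV :: 'a set) = n + 2"
    and nfac: "n_factor sc n mu"
    and pb: "proper_basis sc n mu"
    and bil: "bilinear_form sc B"
    and sym: "symmetric_form B"
    and nd: "nondegenerate B"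
    and inv: "\<And>i x y. i \<in> {2..n+1} \<Longrightarrow> B (mu i * x) y + B x (mu i * y) = 0"
    and B11: "B 1 1 = 0"
  shows "(\<forall>i\<in>{2..n+1}. B 1 (mu i) = 0)
    \<and> (\<forall>i\<in>{2..n+1}. \<forall>j\<in>{2..n+1}. B (mu i) (mu j) = - B 1 (mu i * mu j))
    \<and> (\<forall>i\<in>{2..n+2}. B (mu i) (mu (n+2)) = 0) \<and> B 1 (mu (n+2)) \<noteq> 0
    \<and> vector_space.dim sc (ideal_pow sc max_ideal 2) = 1
    \<and> ideal_pow sc max_ideal 2 = module.span sc {mu (n+2)}
    \<and> (B 1 (mu (n+2)) = -1 \<longrightarrow> B = B0 sc n mu)"
proof -
  have "calg sc" using loc unfolding local_algebra_def by blast
  then interpret factor_form sc B n mu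
    using assms by unfold_locales
  show ?thesis
    using B_one_gen B_gen_gen B_top B_one_top dim_M_square M_square normalized_form_is_B0 by blast
qed

end
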